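(* For every $n\ge 1$ let $H_n$ and $P_n$ denote the numbers of tilings of the regions $H_n$ and $P_n$ (defined in the context). Then $H_1=1$, $H_2=3$, $P_1=1$, $P_2=2$, and for all $n\ge 2$ $$H_n=H_{n-1}+2P_{n-1},\qquad P_n=H_{n-1}+P_{n-1}.$$ Consequently, for all $n\ge 3$, $H_n=2H_{n-1}+H_{n-2}$ and $P_n=2P_{n-1}+P_{n-2}$. In particular $(P_n)_{n\ge1}=(1,2,5,12,29,70,\dots)$ is the sequence of Pell numbers and $(H_n)_{n\ge1}=(1,3,7,17,41,99,\dots)$, i.e. for all $n\ge1$ $$P_n=\frac{(1+\sqrt2)^n-(1-\sqrt2)^n}{2\sqrt2},\qquad H_n=\frac{(1+\sqrt2)^n+(1-\sqrt2)^n}{2}.$$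
   Context: Let $s=\sqrt3/2$. Consider the standard triangular lattice in the plane whose vertices are the points $(a+b/2,\,bs)$ with $a,b\in\mathbb Z$ and whose edges are the unit segments joining lattice points in the directions $0^\circ,60^\circ,120^\circ$; it divides the plane into unit equilateral triangles called cells. A small tile is a single cell; a large tile is an equilateral triangle of side $2$ whose vertices are lattice points (so it is a union of $4$ cells; it may point up or down). For a region $R$ that is a finite union of cells, a tiling of $R$ is a finite set of small and large tiles, each contained in $R$, with pairwise disjoint interiors and union equal to $R$. For $n\ge1$, the region $H_n$ is the union of the trapezoid with vertices $(0,0),(n,0),(n-\tfrac12,s),(\tfrac12,s)$ and the trapezoid with vertices $(\tfrac12,s),(n-\tfrac12,s),(n,2s),(0,2s)$ (for $n=1$ these degenerate to two unit triangles meeting at a single point); $H_n$ consists of $4n-2$ cells. The region $P_n$ is $H_n$ with the cell with vertices $(n-1,0),(n,0),(n-\tfrac12,s)$ removed ($4n-3$ cells). By abuse of notation, $H_n$ and $P_n$ also denote the number of tilings of these regions. *)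

theory Defs
  imports Complex_Main
begin

text \<open>Lattice point (a,b) in lattice coordinates is the
  plane point (a + b/2, b*sqrt 3/2).  The cell (a,b,True) is the up-pointing unit triangle
  with vertices (a,b),(a+1,b),(a,b+1); the cell (a,b,False) is the down-pointing unit
  triangle with vertices (a+1,b),(a,b+1),(a+1,b+1).  Every cell arises uniquely this way.\<close>

type_synonym cell = "int \<times> int \<times> bool"

definition up :: "int \<Rightarrow> int \<Rightarrow> cell" where "up a b = (a, b, True)"
definition dn :: "int \<Rightarrow> int \<Rightarrow> cell" where "dn a b = (a, b, False)"

text \<open>A tile is identified with the set of cells it covers.  Small tiles: single cells.
  Large up tile with vertices (a,b),(a+2,b),(a,b+2); large down tile with vertices
  (a+2,b),(a,b+2),(a+2,b+2).\<close>

definition small_tiles :: "cell set set" where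
  "small_tiles = {{c} | c. True}"

definition large_tiles :: "cell set set" where
  "large_tiles =
     {{up a b, up (a+1) b, up a (b+1), dn a b} | a b. True} \<union>
     {{dn (a+1) b, dn a (b+1), dn (a+1) (b+1), up (a+1) (b+1)} | a b. True}"

definition is_tile :: "cell set \<Rightarrow> bool" where
  "is_tile t \<longleftrightarrow> t \<in> small_tiles \<union> large_tiles"

text \<open>Tilings: finite sets of tiles contained in R, with pairwise disjoint interiors
  (equivalently disjoint cell sets), whose union is R.\<close>

definition is_tiling :: "cell set \<Rightarrow> cell set set \<Rightarrow> bool" where
  "is_tiling R T \<longleftrightarrow> finite T \<and> (\<forall>t\<in>T. is_tile t \<and> t \<subseteq> R)
     \<and> (\<forall>t\<in>T. \<forall>u\<in>T. t \<noteq> u \<longrightarrow> t \<inter> u = {}) \<and> \<Union>T = R"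

definition num_tilings :: "cell set \<Rightarrow> nat" where
  "num_tilings R = card {T. is_tiling R T}"

definition H_region :: "nat \<Rightarrow> cell set" where
  "H_region n =
     {up a 0 | a. 0 \<le> a \<and> a \<le> int n - 1} \<union>
     {dn a 0 | a. 0 \<le> a \<and> a \<le> int n - 2} \<union>
     {dn a 1 | a. -1 \<le> a \<and> a \<le> int n - 2} \<union>
     {up a 1 | a. 0 \<le> a \<and> a \<le> int n - 2}"

text \<open>P_n: H_n minus the cell with vertices (n-1,0),(n,0),(n-1/2,s).\<close>

definition P_region :: "nat \<Rightarrow> cell set" where
  "P_region n = H_region n - {up (int n - 1) 0}"

definition Hn :: "nat \<Rightarrow> nat" where "Hn n = num_tilings (H_region n)"
definition Pn :: "nat \<Rightarrow> nat" where "Pn n = num_tilings (P_region n)"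

end

theory Submission
  imports Defs
begin

text \<open>A tiling is determined by its large tiles, the remaining cells being covered by small
  ones, so tilings of a region correspond to families of pairwise disjoint large tiles inside it.
  In \<open>H\<^sub>m\<^sub>+\<^sub>1\<close> these are the up triangles \<open>U\<^sub>c\<close> and the down triangles \<open>D\<^sub>c\<close> for \<open>c < m\<close>
  (in \<open>P\<^sub>m\<^sub>+\<^sub>1\<close> only \<open>c < m - 1\<close> for \<open>U\<^sub>c\<close>), and the only overlaps are between
  \<open>U\<^sub>c\<close> and \<open>U\<^sub>c\<^sub>+\<^sub>1\<close>, \<open>D\<^sub>c\<close> and \<open>D\<^sub>c\<^sub>+\<^sub>1\<close>, \<open>U\<^sub>c\<close> and \<open>D\<^sub>c\<close>. Hence tilings correspond to
  pairs \<open>(A, B)\<close> of disjoint sets of positions without two consecutive elements. Splitting by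
  whether the last position lies in \<open>A\<close>, in \<open>B\<close> or in neither gives the first-order
  recurrences, and the closed forms follow from \<open>H\<^sub>k \<plusminus> \<surd>2 P\<^sub>k = (1 \<plusminus> \<surd>2)\<^sup>k\<close>.\<close>

definition large_up :: "int \<Rightarrow> int \<Rightarrow> cell set" where
  "large_up a b = {up a b, up (a+1) b, up a (b+1), dn a b}"

definition large_down :: "int \<Rightarrow> int \<Rightarrow> cell set" where
  "large_down a b = {dn (a+1) b, dn a (b+1), dn (a+1) (b+1), up (a+1) (b+1)}"

lemma large_tiles_iff:
  "t \<in> large_tiles \<longleftrightarrow> (\<exists>a b. t = large_up a b) \<or> (\<exists>a b. t = large_down a b)"
  unfolding large_tiles_def large_up_def large_down_def by blast

lemma large_tile_not_singleton: "t \<in> large_tiles \<Longrightarrow> t \<noteq> {c}"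
  unfolding large_tiles_iff large_up_def large_down_def up_def dn_def by (auto simp: doubleton_eq_iff)

definition packings :: "'a set set \<Rightarrow> 'a set set set" where
  "packings S = {L. L \<subseteq> S \<and> pairwise disjnt L}"

definition fill_singletons :: "cell set \<Rightarrow> cell set set \<Rightarrow> cell set set" where
  "fill_singletons R L = L \<union> (\<lambda>c. {c}) ` (R - \<Union>L)"

lemma is_tile_iff: "is_tile t \<longleftrightarrow> t \<in> large_tiles \<or> (\<exists>c. t = {c})"
  unfolding is_tile_def small_tiles_def by blast

lemma is_tilingD:
  assumes "is_tiling R T"
  shows "finite T" and "t \<in> T \<Longrightarrow> is_tile t" and "t \<in> T \<Longrightarrow> t \<subseteq> R"
    and "t \<in> T \<Longrightarrow> u \<in> T \<Longrightarrow> t \<noteq> u \<Longrightarrow> t \<inter> u = {}" and "\<Union>T = R"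
  using assms unfolding is_tiling_def by blast+

lemma large_part_of_tiling:
  assumes "is_tiling R T"
  shows "T \<inter> large_tiles \<in> packings {t \<in> large_tiles. t \<subseteq> R}"
  using is_tilingD[OF assms] unfolding packings_def pairwise_def disjnt_def by blast

lemma fill_singletons_large_part:
  assumes "is_tiling R T"
  shows "fill_singletons R (T \<inter> large_tiles) = T"
proof (intro equalityI subsetI)
  fix t assume "t \<in> fill_singletons R (T \<inter> large_tiles)"
  then consider "t \<in> T" | c where "t = {c}" "c \<in> R" "c \<notin> \<Union>(T \<inter> large_tiles)"
    unfolding fill_singletons_def by blast
  then show "t \<in> T"
  proof cases
    case (2 c)
    then obtain u where u: "u \<in> T" "c \<in> u" "u \<notin> large_tiles"
      using is_tilingD(5)[OF assms] by blast
    then have "u = {c}" using is_tilingD(2)[OF assms] unfolding is_tile_iff by blast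
    then show ?thesis using u 2 by simp
  qed
next
  fix t assume t: "t \<in> T"
  show "t \<in> fill_singletons R (T \<inter> large_tiles)"
  proof (cases "t \<in> large_tiles")
    case False
    then obtain c where c: "t = {c}"
      using t is_tilingD(2)[OF assms] unfolding is_tile_iff by blast
    have "c \<in> R" using t c is_tilingD(3)[OF assms] by blast
    moreover have "c \<notin> u" if "u \<in> T \<inter> large_tiles" for u
      using that t c False is_tilingD(4)[OF assms] by blast
    ultimately show ?thesis using c unfolding fill_singletons_def by blast
  qed (use t in \<open>simp add: fill_singletons_def\<close>)
qed

lemma is_tiling_fill_singletons:
  assumes "finite R" and "L \<in> packings {t \<in> large_tiles. t \<subseteq> R}"
  shows "is_tiling R (fill_singletons R L)"
proof -
  have L: "L \<subseteq> large_tiles" "\<forall>t\<in>L. t \<subseteq> R" "pairwise disjnt L"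
    using assms(2) unfolding packings_def by auto
  have "finite L" using L(2) assms(1) by (metis Pow_iff finite_Pow_iff finite_subset subsetI)
  then have "finite (fill_singletons R L)" using assms(1) by (simp add: fill_singletons_def)
  moreover have "\<forall>t\<in>fill_singletons R L. is_tile t \<and> t \<subseteq> R"
    using L(1,2) unfolding fill_singletons_def is_tile_iff by auto
  moreover have "\<forall>t\<in>fill_singletons R L. \<forall>u\<in>fill_singletons R L. t \<noteq> u \<longrightarrow> t \<inter> u = {}"
    using L(3) unfolding fill_singletons_def pairwise_def disjnt_def by auto
  moreover have "\<Union>(fill_singletons R L) = R"
    using L(2) unfolding fill_singletons_def by auto
  ultimately show ?thesis unfolding is_tiling_def by (intro conjI)
qed

lemma num_tilings_eq_card_packings:
  assumes "finite R"
  shows "num_tilings R = card (packings {t \<in> large_tiles. t \<subseteq> R})"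
proof -
  have "(\<lambda>c. {c}) ` X \<inter> large_tiles = {}" for X
    using large_tile_not_singleton by blast
  then have "fill_singletons R L \<inter> large_tiles = L" if "L \<in> packings {t \<in> large_tiles. t \<subseteq> R}" for L
    using that unfolding fill_singletons_def packings_def by blast
  then have "bij_betw (\<lambda>T. T \<inter> large_tiles) {T. is_tiling R T} (packings {t \<in> large_tiles. t \<subseteq> R})"
    using large_part_of_tiling fill_singletons_large_part is_tiling_fill_singletons[OF assms]
    by (intro bij_betw_byWitness[where f' = "fill_singletons R"]) auto
  then show ?thesis unfolding num_tilings_def by (rule bij_betw_same_card)
qed

definition no_consecutive :: "nat set \<Rightarrow> bool" where
  "no_consecutive A \<longleftrightarrow> (\<forall>c\<in>A. Suc c \<notin> A)"

text \<open>\<open>A\<close> and \<open>B\<close> will be the positions of the up and down large tiles (see \<open>tile_family\<close>);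
  a set flag forbids the last position \<open>m - 1\<close>, which models the cell missing from \<open>P\<^sub>m\<^sub>+\<^sub>1\<close>.\<close>

definition configs :: "nat \<Rightarrow> bool \<Rightarrow> bool \<Rightarrow> (nat set \<times> nat set) set" where
  "configs m ea eb = {(A, B). A \<subseteq> {..<m} \<and> B \<subseteq> {..<m} \<and> A \<inter> B = {}
     \<and> no_consecutive A \<and> no_consecutive B \<and> (ea \<longrightarrow> m - 1 \<notin> A) \<and> (eb \<longrightarrow> m - 1 \<notin> B)}"

lemma mem_configs:
  "(A, B) \<in> configs m ea eb \<longleftrightarrow> A \<subseteq> {..<m} \<and> B \<subseteq> {..<m} \<and> A \<inter> B = {}
     \<and> no_consecutive A \<and> no_consecutive B \<and> (ea \<longrightarrow> m - 1 \<notin> A) \<and> (eb \<longrightarrow> m - 1 \<notin> B)"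
  unfolding configs_def by simp

lemma configs_0: "configs 0 ea eb = {({}, {})}"
  unfolding configs_def no_consecutive_def by auto

lemma finite_configs: "finite (configs m ea eb)"
  by (rule finite_subset[of _ "Pow {..<m} \<times> Pow {..<m}"]) (auto simp: configs_def)

lemma swap_configs: "prod.swap ` configs m ea eb = configs m eb ea"
  unfolding configs_def by auto

lemma card_configs_swap: "card (configs m ea eb) = card (configs m eb ea)"
  by (metis card_image inj_swap swap_configs)

lemma configs_SucD:
  assumes "(A, B) \<in> configs (Suc m) ea eb" and "m \<in> A"
  shows "\<not> ea" and "(A - {m}, B) \<in> configs m True False"
proof -
  have A: "A \<subseteq> {..<Suc m}" "no_consecutive A" and B: "B \<subseteq> {..<Suc m}" "no_consecutive B"
    and AB: "A \<inter> B = {}" and "ea \<longrightarrow> m \<notin> A"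
    using assms(1) unfolding mem_configs by auto
  then show "\<not> ea" using assms(2) by blast
  have "A - {m} \<subseteq> {..<m}" using A(1) by auto
  moreover have "B \<subseteq> {..<m}"
  proof -
    have "m \<notin> B" using AB assms(2) by blast
    then show ?thesis using B(1) by (auto simp: less_Suc_eq)
  qed
  moreover have "no_consecutive (A - {m})" using A(2) unfolding no_consecutive_def by blast
  moreover have "m - 1 \<notin> A - {m}"
    using A(2) assms(2) unfolding no_consecutive_def by (cases m) auto
  ultimately show "(A - {m}, B) \<in> configs m True False"
    using AB B(2) unfolding mem_configs by blast
qed

lemma configs_SucI:
  assumes "(A, B) \<in> configs m True False"
  shows "(insert m A, B) \<in> configs (Suc m) False eb"
proof -
  have A: "A \<subseteq> {..<m}" "no_consecutive A" "m - 1 \<notin> A" and B: "B \<subseteq> {..<m}" "no_consecutive B"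
    and AB: "A \<inter> B = {}"
    using assms unfolding mem_configs by auto
  have "no_consecutive (insert m A)"
    using A unfolding no_consecutive_def by (auto simp: subset_eq)
  then show ?thesis
    using A(1) B AB unfolding mem_configs by auto
qed

lemma configs_Suc:
  "configs (Suc m) ea eb = configs m False False
     \<union> (if ea then {} else apfst (insert m) ` configs m True False)
     \<union> (if eb then {} else apsnd (insert m) ` configs m False True)"
proof (intro equalityI subsetI)
  fix x assume "x \<in> configs (Suc m) ea eb"
  then obtain A B where x: "x = (A, B)" and AB: "(A, B) \<in> configs (Suc m) ea eb"
    by (cases x) auto
  then have BA: "(B, A) \<in> configs (Suc m) eb ea"
    using swap_configs by fastforce
  consider "m \<in> A" | "m \<in> B" | "m \<notin> A" "m \<notin> B" by blast
  then show "x \<in> configs m False False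
     \<union> (if ea then {} else apfst (insert m) ` configs m True False)
     \<union> (if eb then {} else apsnd (insert m) ` configs m False True)"
  proof cases
    case 1
    then have "x = apfst (insert m) (A - {m}, B)" using x by auto
    then have "x \<in> apfst (insert m) ` configs m True False"
      using configs_SucD(2)[OF AB 1] by (rule image_eqI)
    then show ?thesis using configs_SucD(1)[OF AB 1] by simp
  next
    case 2
    have "x = apsnd (insert m) (A, B - {m})" using x 2 by auto
    moreover have "(A, B - {m}) \<in> configs m False True"
      using configs_SucD(2)[OF BA 2] swap_configs by fastforce
    ultimately have "x \<in> apsnd (insert m) ` configs m False True" by (rule image_eqI)
    then show ?thesis using configs_SucD(1)[OF BA 2] by simp
  next
    case 3
    then have "(A, B) \<in> configs m False False"
      using AB unfolding mem_configs no_consecutive_def by (auto simp: less_Suc_eq)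
    then show ?thesis using x by blast
  qed
next
  fix x assume "x \<in> configs m False False
     \<union> (if ea then {} else apfst (insert m) ` configs m True False)
     \<union> (if eb then {} else apsnd (insert m) ` configs m False True)"
  then show "x \<in> configs (Suc m) ea eb"
  proof (elim UnE)
    assume "x \<in> configs m False False"
    then show ?thesis unfolding configs_def by auto
  next
    assume "x \<in> (if ea then {} else apfst (insert m) ` configs m True False)"
    then show ?thesis using configs_SucI by (auto split: if_splits)
  next
    assume "x \<in> (if eb then {} else apsnd (insert m) ` configs m False True)"
    then obtain A B where "\<not> eb" "(B, A) \<in> configs m True False" "x = (A, insert m B)"
      using swap_configs by (fastforce split: if_splits)
    then show ?thesis using configs_SucI[of B A m ea] swap_configs by fastforce
  qed
qed

lemma top_notin_configs: "x \<in> configs m ea eb \<Longrightarrow> m \<notin> fst x \<and> m \<notin> snd x"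
  unfolding configs_def by auto

lemma inj_on_insert_top:
  "inj_on (apfst (insert m)) (configs m ea eb)" "inj_on (apsnd (insert m)) (configs m ea eb)"
  by (auto intro!: inj_onI dest!: top_notin_configs simp: apfst_def apsnd_def map_prod_def
      split: prod.splits dest: insert_ident)

lemma card_configs_Suc:
  "card (configs (Suc m) ea eb) = card (configs m False False)
     + (if ea then 0 else card (configs m True False))
     + (if eb then 0 else card (configs m False True))"
proof -
  have "configs m False False \<inter> apfst (insert m) ` configs m True False = {}"
    "configs m False False \<inter> apsnd (insert m) ` configs m False True = {}"
    "(configs m False False \<union> apfst (insert m) ` configs m True False)
       \<inter> apsnd (insert m) ` configs m False True = {}"
    by (force dest: top_notin_configs)+
  then show ?thesis
    unfolding configs_Suc
    by (simp add: card_Un_disjoint finite_configs card_image inj_on_insert_top)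
qed

lemma card_configs_Suc_False_False:
  "card (configs (Suc m) False False) = card (configs m False False) + 2 * card (configs m True False)"
  using card_configs_Suc[of m False False] card_configs_swap[of m True False] by simp

lemma card_configs_Suc_True_False:
  "card (configs (Suc m) True False) = card (configs m False False) + card (configs m True False)"
  using card_configs_Suc[of m True False] card_configs_swap[of m True False] by simp

text \<open>Indexed so that \<open>up_tile c\<close> and \<open>down_tile c\<close> overlap (in \<open>dn c 0\<close> and \<open>up c 1\<close>).\<close>

definition up_tile :: "nat \<Rightarrow> cell set" where
  "up_tile c = large_up (int c) 0"

definition down_tile :: "nat \<Rightarrow> cell set" where
  "down_tile c = large_down (int c - 1) 0"

lemma up_tile_eq_iff [simp]: "up_tile a = up_tile b \<longleftrightarrow> a = b"
proof
  assume ab: "up_tile a = up_tile b"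
  have "dn (int a) 0 \<in> up_tile a" by (simp add: up_tile_def large_up_def)
  then have "dn (int a) 0 \<in> up_tile b" by (simp only: ab)
  then show "a = b" by (auto simp: up_tile_def large_up_def up_def dn_def)
qed simp

lemma down_tile_eq_iff [simp]: "down_tile a = down_tile b \<longleftrightarrow> a = b"
proof
  assume ab: "down_tile a = down_tile b"
  have "up (int a) 1 \<in> down_tile a" by (simp add: down_tile_def large_down_def)
  then have "up (int a) 1 \<in> down_tile b" by (simp only: ab)
  then show "a = b" by (auto simp: down_tile_def large_down_def up_def dn_def)
qed simp

lemma up_tile_neq_down_tile [simp]: "up_tile a \<noteq> down_tile b" "down_tile b \<noteq> up_tile a"
  unfolding up_tile_def down_tile_def large_up_def large_down_def up_def dn_def
  by (auto simp: insert_eq_iff)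

lemma disjnt_up_tiles: "disjnt (up_tile a) (up_tile b) \<longleftrightarrow> a \<noteq> b \<and> Suc a \<noteq> b \<and> Suc b \<noteq> a"
  unfolding disjnt_def up_tile_def large_up_def up_def dn_def by auto

lemma disjnt_down_tiles: "disjnt (down_tile a) (down_tile b) \<longleftrightarrow> a \<noteq> b \<and> Suc a \<noteq> b \<and> Suc b \<noteq> a"
  unfolding disjnt_def down_tile_def large_down_def up_def dn_def by auto

lemma disjnt_up_down_tile:
  "disjnt (up_tile a) (down_tile b) \<longleftrightarrow> a \<noteq> b" "disjnt (down_tile b) (up_tile a) \<longleftrightarrow> a \<noteq> b"
  unfolding disjnt_def up_tile_def down_tile_def large_up_def large_down_def up_def dn_def by auto

definition sparse_pairs :: "nat set \<Rightarrow> nat set \<Rightarrow> (nat set \<times> nat set) set" where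
  "sparse_pairs U V = {(A, B). A \<subseteq> U \<and> B \<subseteq> V \<and> A \<inter> B = {} \<and> no_consecutive A \<and> no_consecutive B}"

definition tile_family :: "nat set \<times> nat set \<Rightarrow> cell set set" where
  "tile_family AB = up_tile ` fst AB \<union> down_tile ` snd AB"

lemma up_tile_in_tile_family [simp]: "up_tile c \<in> tile_family AB \<longleftrightarrow> c \<in> fst AB"
  unfolding tile_family_def by auto

lemma down_tile_in_tile_family [simp]: "down_tile c \<in> tile_family AB \<longleftrightarrow> c \<in> snd AB"
  unfolding tile_family_def by auto

lemma inj_tile_family: "inj tile_family"
proof (rule injI)
  fix x y assume "tile_family x = tile_family y"
  then have "c \<in> fst x \<longleftrightarrow> c \<in> fst y" "c \<in> snd x \<longleftrightarrow> c \<in> snd y" for c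
    by (metis up_tile_in_tile_family, metis down_tile_in_tile_family)
  then show "x = y" by (simp add: prod_eq_iff set_eq_iff)
qed

lemma pairwise_disjnt_tile_family:
  "pairwise disjnt (tile_family (A, B)) \<longleftrightarrow> A \<inter> B = {} \<and> no_consecutive A \<and> no_consecutive B"
proof
  assume pw: "pairwise disjnt (tile_family (A, B))"
  have "c \<notin> B" if "c \<in> A" for c
    using pairwiseD(1)[OF pw, of "up_tile c" "down_tile c"] that by (auto simp: disjnt_up_down_tile)
  moreover have "Suc c \<notin> A" if "c \<in> A" for c
    using pairwiseD(1)[OF pw, of "up_tile c" "up_tile (Suc c)"] that by (auto simp: disjnt_up_tiles)
  moreover have "Suc c \<notin> B" if "c \<in> B" for c
    using pairwiseD(1)[OF pw, of "down_tile c" "down_tile (Suc c)"] that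
    by (auto simp: disjnt_down_tiles)
  ultimately show "A \<inter> B = {} \<and> no_consecutive A \<and> no_consecutive B"
    unfolding no_consecutive_def by blast
next
  assume "A \<inter> B = {} \<and> no_consecutive A \<and> no_consecutive B"
  then show "pairwise disjnt (tile_family (A, B))"
    unfolding tile_family_def no_consecutive_def pairwise_def
    by (auto simp: disjnt_up_tiles disjnt_down_tiles disjnt_up_down_tile)
qed

lemma packings_tiles_eq_image_sparse_pairs:
  "packings (up_tile ` U \<union> down_tile ` V) = tile_family ` sparse_pairs U V"
proof (intro equalityI subsetI)
  fix L assume L: "L \<in> packings (up_tile ` U \<union> down_tile ` V)"
  let ?AB = "({c. up_tile c \<in> L}, {c. down_tile c \<in> L})"
  have "L = tile_family ?AB" using L unfolding packings_def tile_family_def by auto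
  moreover have "?AB \<in> sparse_pairs U V"
    using L pairwise_disjnt_tile_family[of "fst ?AB" "snd ?AB"] \<open>L = tile_family ?AB\<close>
    unfolding packings_def sparse_pairs_def by auto
  ultimately show "L \<in> tile_family ` sparse_pairs U V" by blast
next
  fix L assume "L \<in> tile_family ` sparse_pairs U V"
  then obtain A B where "L = tile_family (A, B)" "(A, B) \<in> sparse_pairs U V" by auto
  then show "L \<in> packings (up_tile ` U \<union> down_tile ` V)"
    using pairwise_disjnt_tile_family[of A B]
    unfolding packings_def sparse_pairs_def tile_family_def by auto
qed

lemma card_packings_tiles:
  "card (packings (up_tile ` U \<union> down_tile ` V)) = card (sparse_pairs U V)"
  unfolding packings_tiles_eq_image_sparse_pairs
  by (rule card_image) (rule inj_on_subset[OF inj_tile_family], simp)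

lemma mem_H_region:
  "(a, b, u) \<in> H_region n \<longleftrightarrow>
     (b = 0 \<and> u \<and> 0 \<le> a \<and> a \<le> int n - 1) \<or> (b = 0 \<and> \<not> u \<and> 0 \<le> a \<and> a \<le> int n - 2) \<or>
     (b = 1 \<and> \<not> u \<and> -1 \<le> a \<and> a \<le> int n - 2) \<or> (b = 1 \<and> u \<and> 0 \<le> a \<and> a \<le> int n - 2)"
  unfolding H_region_def up_def dn_def by auto

lemma finite_H_region: "finite (H_region n)"
  by (rule finite_subset[of _ "{-1..int n} \<times> {0..1} \<times> UNIV"]) (auto simp: mem_H_region)

lemma large_up_subset_H_region: "large_up a b \<subseteq> H_region n \<longleftrightarrow> b = 0 \<and> 0 \<le> a \<and> a \<le> int n - 2"
  unfolding large_up_def up_def dn_def by (auto simp: mem_H_region)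

lemma large_up_subset_P_region: "large_up a b \<subseteq> P_region n \<longleftrightarrow> b = 0 \<and> 0 \<le> a \<and> a \<le> int n - 3"
  unfolding P_region_def large_up_def up_def dn_def by (auto simp: mem_H_region)

lemma large_down_subset_H_region: "large_down a b \<subseteq> H_region n \<longleftrightarrow> b = 0 \<and> -1 \<le> a \<and> a \<le> int n - 3"
  unfolding large_down_def up_def dn_def by (auto simp: mem_H_region)

lemma large_down_subset_P_region: "large_down a b \<subseteq> P_region n \<longleftrightarrow> large_down a b \<subseteq> H_region n"
  unfolding P_region_def large_down_def up_def dn_def by (auto simp: mem_H_region)

lemma large_tiles_inside_eq:
  assumes up: "\<And>a b. large_up a b \<subseteq> R \<longleftrightarrow> b = 0 \<and> 0 \<le> a \<and> a < int p"
    and down: "\<And>a b. large_down a b \<subseteq> R \<longleftrightarrow> b = 0 \<and> 0 \<le> a + 1 \<and> a + 1 < int q"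
  shows "{t \<in> large_tiles. t \<subseteq> R} = up_tile ` {..<p} \<union> down_tile ` {..<q}"
proof (intro equalityI subsetI)
  fix t assume t: "t \<in> {t \<in> large_tiles. t \<subseteq> R}"
  then consider a b where "t = large_up a b" | a b where "t = large_down a b"
    unfolding large_tiles_iff by blast
  then show "t \<in> up_tile ` {..<p} \<union> down_tile ` {..<q}"
  proof cases
    case (1 a b)
    then have "b = 0" "0 \<le> a" "a < int p" using t up by auto
    then have "t = up_tile (nat a)" "nat a < p" using 1 by (auto simp: up_tile_def)
    then show ?thesis by blast
  next
    case (2 a b)
    then have "b = 0" "0 \<le> a + 1" "a + 1 < int q" using t down by auto
    then have "t = down_tile (nat (a + 1))" "nat (a + 1) < q" using 2 by (auto simp: down_tile_def)
    then show ?thesis by blast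
  qed
next
  fix t assume "t \<in> up_tile ` {..<p} \<union> down_tile ` {..<q}"
  then consider c where "t = up_tile c" "c < p" | c where "t = down_tile c" "c < q" by blast
  then show "t \<in> {t \<in> large_tiles. t \<subseteq> R}"
  proof cases
    case (1 c)
    then show ?thesis using up[of "int c" 0] by (auto simp: up_tile_def large_tiles_iff)
  next
    case (2 c)
    then show ?thesis using down[of "int c - 1" 0] by (auto simp: down_tile_def large_tiles_iff)
  qed
qed

lemma large_tiles_in_H_region:
  "{t \<in> large_tiles. t \<subseteq> H_region (Suc m)} = up_tile ` {..<m} \<union> down_tile ` {..<m}"
  by (rule large_tiles_inside_eq) (auto simp: large_up_subset_H_region large_down_subset_H_region)

lemma large_tiles_in_P_region:
  "{t \<in> large_tiles. t \<subseteq> P_region (Suc m)} = up_tile ` {..<m - 1} \<union> down_tile ` {..<m}"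
  by (rule large_tiles_inside_eq)
    (auto simp: large_up_subset_P_region large_down_subset_P_region large_down_subset_H_region)

lemma configs_eq_sparse_pairs:
  "configs m False False = sparse_pairs {..<m} {..<m}"
  "configs m True False = sparse_pairs {..<m - 1} {..<m}"
proof -
  have "A \<subseteq> {..<m} \<and> m - 1 \<notin> A \<longleftrightarrow> A \<subseteq> {..<m - 1}" for A
  proof -
    have "x < m - 1 \<longleftrightarrow> x < m \<and> x \<noteq> m - 1" for x :: nat by linarith
    then show ?thesis by blast
  qed
  then show "configs m False False = sparse_pairs {..<m} {..<m}"
    "configs m True False = sparse_pairs {..<m - 1} {..<m}"
    unfolding configs_def sparse_pairs_def by auto
qed

lemma Hn_Suc: "Hn (Suc m) = card (configs m False False)"
  unfolding Hn_def
  by (simp add: num_tilings_eq_card_packings finite_H_region large_tiles_in_H_region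
      card_packings_tiles configs_eq_sparse_pairs)

lemma Pn_Suc: "Pn (Suc m) = card (configs m True False)"
proof -
  have "finite (P_region (Suc m))" using finite_H_region by (simp add: P_region_def)
  then show ?thesis
    unfolding Pn_def
    by (simp add: num_tilings_eq_card_packings large_tiles_in_P_region card_packings_tiles
        configs_eq_sparse_pairs)
qed

lemma pell_closed_form:
  fixes h p :: "nat \<Rightarrow> real"
  assumes "h 0 = 1" "p 0 = 1"
    and "\<And>k. h (Suc k) = h k + 2 * p k" "\<And>k. p (Suc k) = h k + p k"
  shows "p k = ((1 + sqrt 2) ^ Suc k - (1 - sqrt 2) ^ Suc k) / (2 * sqrt 2)"
    and "h k = ((1 + sqrt 2) ^ Suc k + (1 - sqrt 2) ^ Suc k) / 2"
proof -
  have sqrt2: "sqrt 2 * sqrt 2 = (2::real)" by simp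
  have "h k + sqrt 2 * p k = (1 + sqrt 2) ^ Suc k \<and> h k - sqrt 2 * p k = (1 - sqrt 2) ^ Suc k"
  proof (induction k)
    case (Suc k)
    have "h (Suc k) + sqrt 2 * p (Suc k) = (1 + sqrt 2) * (h k + sqrt 2 * p k)"
      "h (Suc k) - sqrt 2 * p (Suc k) = (1 - sqrt 2) * (h k - sqrt 2 * p k)"
      using assms(3,4) sqrt2 by (simp_all add: algebra_simps)
    then show ?case using Suc.IH by simp
  qed (simp add: assms(1,2))
  then show "p k = ((1 + sqrt 2) ^ Suc k - (1 - sqrt 2) ^ Suc k) / (2 * sqrt 2)"
    and "h k = ((1 + sqrt 2) ^ Suc k + (1 - sqrt 2) ^ Suc k) / 2"
    by (auto simp: field_simps)
qed

lemma Hn_Suc_0: "Hn (Suc 0) = 1" and Pn_Suc_0: "Pn (Suc 0) = 1"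
  using Hn_Suc[of 0] Pn_Suc[of 0] by (simp_all add: configs_0)

lemma Hn_Suc_Suc: "Hn (Suc (Suc m)) = Hn (Suc m) + 2 * Pn (Suc m)"
  by (simp add: Hn_Suc Pn_Suc card_configs_Suc_False_False)

lemma Pn_Suc_Suc: "Pn (Suc (Suc m)) = Hn (Suc m) + Pn (Suc m)"
  by (simp add: Hn_Suc Pn_Suc card_configs_Suc_True_False)

theorem theorem1:
  shows "Hn 1 = 1 \<and> Hn 2 = 3 \<and> Pn 1 = 1 \<and> Pn 2 = 2
    \<and> (\<forall>n\<ge>2. Hn n = Hn (n - 1) + 2 * Pn (n - 1) \<and> Pn n = Hn (n - 1) + Pn (n - 1))
    \<and> (\<forall>n\<ge>3. Hn n = 2 * Hn (n - 1) + Hn (n - 2) \<and> Pn n = 2 * Pn (n - 1) + Pn (n - 2))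
    \<and> (\<forall>n\<ge>1. real (Pn n) = ((1 + sqrt 2) ^ n - (1 - sqrt 2) ^ n) / (2 * sqrt 2)
              \<and> real (Hn n) = ((1 + sqrt 2) ^ n + (1 - sqrt 2) ^ n) / 2)"
proof (intro conjI allI impI)
  show "Hn 1 = 1" "Pn 1 = 1" using Hn_Suc_0 Pn_Suc_0 by simp_all
  show "Hn 2 = 3" "Pn 2 = 2"
    using Hn_Suc_Suc[of 0] Pn_Suc_Suc[of 0] by (simp_all add: numeral_2_eq_2 Hn_Suc_0 Pn_Suc_0)
next
  fix n :: nat assume "2 \<le> n"
  then obtain m where "n = 2 + m" using le_Suc_ex by blast
  then have n: "n = Suc (Suc m)" by simp
  show "Hn n = Hn (n - 1) + 2 * Pn (n - 1)" "Pn n = Hn (n - 1) + Pn (n - 1)"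
    unfolding n by (simp_all add: Hn_Suc_Suc Pn_Suc_Suc)
next
  fix n :: nat assume "3 \<le> n"
  then obtain m where "n = 3 + m" using le_Suc_ex by blast
  then have n: "n = Suc (Suc (Suc m))" by simp
  show "Hn n = 2 * Hn (n - 1) + Hn (n - 2)" "Pn n = 2 * Pn (n - 1) + Pn (n - 2)"
    unfolding n using Hn_Suc_Suc[of m] Pn_Suc_Suc[of m] Hn_Suc_Suc[of "Suc m"] Pn_Suc_Suc[of "Suc m"]
    by simp_all
next
  fix n :: nat assume "1 \<le> n"
  then obtain k where n: "n = Suc k" using Suc_le_D by auto
  note closed_form =
    pell_closed_form[where h = "\<lambda>k. real (Hn (Suc k))" and p = "\<lambda>k. real (Pn (Suc k))"]
  show "real (Pn n) = ((1 + sqrt 2) ^ n - (1 - sqrt 2) ^ n) / (2 * sqrt 2)"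
    unfolding n by (rule closed_form) (simp_all add: Hn_Suc_0 Pn_Suc_0 Hn_Suc_Suc Pn_Suc_Suc)
  show "real (Hn n) = ((1 + sqrt 2) ^ n + (1 - sqrt 2) ^ n) / 2"
    unfolding n by (rule closed_form) (simp_all add: Hn_Suc_0 Pn_Suc_0 Hn_Suc_Suc Pn_Suc_Suc)
qed

end
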